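(* Let $H\in\mathcal{H}$. Then: \begin{enumerate} \item $H_{reg}$ is an anti-symmetric convex-concave function on $\mathbb{R}^N\times\mathbb{R}^N$ whose restriction to $\bar\Omega\times\bar\Omega$ belongs to $\mathcal{H}$. \item $L_{H_{reg}}$ is convex and continuous in both variables, and $L_{H_{reg}}\le L_H$ on $\bar\Omega\times B_R$. \item $|L_{H_{reg}}(x,p)|\le R\|x\|+R\|p\|+5R^2$ and $|H_{reg}(x,y)|\le R\|x\|+R\|y\|+4R^2$ for all $x,y,p\in\mathbb{R}^N$. \item $L_{H_{reg}}$ and $H_{reg}$ are Lipschitz continuous with Lipschitz constants at most $4NR$. \end{enumerate}
   Context: $\Omega\subset\mathbb{R}^N$ is a bounded domain with $\bar\Omega\subset B_R$, where $B_R$ is the ball of radius $R>0$ centered at the origin. $\mathcal{H}$ is the set of continuous $H$ on $\bar\Omega\times\bar\Omega$ with $H(x,y)=-H(y,x)$. For a continuous $H$ on $\bar\Omega\times\bar\Omega$ define, for $x,p\in\mathbb{R}^N$, $L_H(x,p)=\sup_{y\in\bar\Omega}\{\langle y,p\rangle-H(y,x)\}$ (the same formula defines $L_G$ for any $G$ defined on $\mathbb{R}^N\times\mathbb{R}^N$). Restricted conjugates: $L_H^*(q,y)=\sup_{x\in\bar\Omega,\,p\in B_R}\{\langle y,p\rangle+\langle q,x\rangle-L_H(x,p)\}$ and $L_H^{**}(y,q)=\sup_{x\in\bar\Omega,\,p\in B_R}\{\langle y,p\rangle+\langle q,x\rangle-L_H^*(p,x)\}$ for $y,q\in\mathbb{R}^N$.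 For a function $L$ on $\mathbb{R}^N\times\mathbb{R}^N$, its $B_R$-Hamiltonian is $H_L(x,y)=\sup_{p\in B_R}\{\langle x,p\rangle-L(y,p)\}$. The regularization of $H$ is $H_{reg}(x,y)=\tfrac12\big(H_{L_H^{**}}(x,y)-H_{L_H^{**}}(y,x)\big)$ for $x,y\in\mathbb{R}^N$. *)

theory Defs
  imports "HOL-Analysis.Analysis"
begin

definition classH :: "'a::euclidean_space set \<Rightarrow> ('a \<Rightarrow> 'a \<Rightarrow> real) \<Rightarrow> bool" where
  "classH Om H \<longleftrightarrow>
     continuous_on (closure Om \<times> closure Om) (\<lambda>(x, y). H x y) \<and>
     (\<forall>x\<in>closure Om. \<forall>y\<in>closure Om. H x y = - H y x)"

definition LagL :: "'a::euclidean_space set \<Rightarrow> ('a \<Rightarrow> 'a \<Rightarrow> real) \<Rightarrow> 'a \<Rightarrow> 'a \<Rightarrow> real" where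
  "LagL Om G x p = (SUP y\<in>closure Om. inner y p - G y x)"

definition LagStar :: "'a::euclidean_space set \<Rightarrow> real \<Rightarrow> ('a \<Rightarrow> 'a \<Rightarrow> real) \<Rightarrow> 'a \<Rightarrow> 'a \<Rightarrow> real" where
  "LagStar Om R H q y =
     (SUP xp\<in>closure Om \<times> ball 0 R. inner y (snd xp) + inner q (fst xp) - LagL Om H (fst xp) (snd xp))"

definition LagStarStar :: "'a::euclidean_space set \<Rightarrow> real \<Rightarrow> ('a \<Rightarrow> 'a \<Rightarrow> real) \<Rightarrow> 'a \<Rightarrow> 'a \<Rightarrow> real" where
  "LagStarStar Om R H y q =
     (SUP xp\<in>closure Om \<times> ball 0 R. inner y (snd xp) + inner q (fst xp) - LagStar Om R H (snd xp) (fst xp))"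

definition HamB :: "real \<Rightarrow> ('a::euclidean_space \<Rightarrow> 'a \<Rightarrow> real) \<Rightarrow> 'a \<Rightarrow> 'a \<Rightarrow> real" where
  "HamB R L x y = (SUP p\<in>ball 0 R. inner x p - L y p)"

definition Hreg :: "'a::euclidean_space set \<Rightarrow> real \<Rightarrow> ('a \<Rightarrow> 'a \<Rightarrow> real) \<Rightarrow> 'a \<Rightarrow> 'a \<Rightarrow> real" where
  "Hreg Om R H x y =
     (HamB R (LagStarStar Om R H) x y - HamB R (LagStarStar Om R H) y x) / 2"

end

theory Submission
  imports Defs
begin

text \<open>
  Every object in the construction of \<open>H_reg\<close> is a supremum of a bounded family of simple
  functions: \<open>L_H\<close> and the conjugates \<open>L_H^*\<close>, \<open>L_H^{**}\<close> are suprema over \<open>K = closure \<Omega>\<close> and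
  \<open>K \<times> B_R\<close>, the Hamiltonian \<open>H_{L^{**}}\<close> and \<open>L_{H_reg}\<close> are suprema over \<open>B_R\<close> and \<open>K\<close>.
  Since \<open>K\<close> and \<open>B_R\<close> lie in the ball of radius \<open>R\<close>, every member of these families is affine
  with slope of norm at most \<open>R\<close> (up to a term that is itself \<open>R\<close>-Lipschitz or concave).

  The only place where anti-symmetry of \<open>H\<close> enters is
  \<open>L_H^*(p, x) \<le> L_H(x, p)\<close>, which yields \<open>L_{H_reg} \<le> L_H\<close> on \<open>K \<times> B_R\<close>; the growth bounds
  follow from \<open>H_reg(y, y) = 0\<close> and the Lipschitz estimates. The theorem collects these facts,
  with the Lipschitz constant \<open>2R \<le> 4NR\<close>.
\<close>

section \<open>General facts on suprema of real-valued families\<close>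

lemma abs_inner_le_radius:
  fixes y p :: "'a::real_inner"
  assumes "norm y \<le> R"
  shows "\<bar>inner y p\<bar> \<le> R * norm p" and "\<bar>inner p y\<bar> \<le> R * norm p"
proof -
  have "\<bar>inner y p\<bar> \<le> norm y * norm p" by (rule Cauchy_Schwarz_ineq2)
  also have "\<dots> \<le> R * norm p" using assms by (simp add: mult_right_mono)
  finally show "\<bar>inner y p\<bar> \<le> R * norm p" .
  then show "\<bar>inner p y\<bar> \<le> R * norm p" by (simp add: inner_commute)
qed

text \<open>Suprema of two pointwise \<open>c\<close>-close bounded families are \<open>c\<close>-close; this turns
  Lipschitz estimates for the members of a family into estimates for its supremum.\<close>
lemma cSUP_abs_diff_le:
  fixes f g :: "'b \<Rightarrow> real"
  assumes "A \<noteq> {}" and "bdd_above (f ` A)" and "bdd_above (g ` A)"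
    and "\<And>a. a \<in> A \<Longrightarrow> \<bar>f a - g a\<bar> \<le> c"
  shows "\<bar>(SUP a\<in>A. f a) - (SUP a\<in>A. g a)\<bar> \<le> c"
proof -
  have "(SUP a\<in>A. f a) \<le> (SUP a\<in>A. g a) + c"
  proof (rule cSUP_least[OF assms(1)])
    fix a assume "a \<in> A"
    then show "f a \<le> (SUP a\<in>A. g a) + c"
      using assms(4)[of a] cSUP_upper[OF _ assms(3), of a] by linarith
  qed
  moreover have "(SUP a\<in>A. g a) \<le> (SUP a\<in>A. f a) + c"
  proof (rule cSUP_least[OF assms(1)])
    fix a assume "a \<in> A"
    then show "g a \<le> (SUP a\<in>A. f a) + c"
      using assms(4)[of a] cSUP_upper[OF _ assms(2), of a] by linarith
  qed
  ultimately show ?thesis by linarith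
qed

lemma cSUP_scaled_least:
  fixes f :: "'b \<Rightarrow> real"
  assumes "u > 0" and "A \<noteq> {}" and "\<And>a. a \<in> A \<Longrightarrow> u * f a \<le> W"
  shows "u * (SUP a\<in>A. f a) \<le> W"
proof -
  have "(SUP a\<in>A. f a) \<le> W / u"
    using assms by (intro cSUP_least) (auto simp: pos_le_divide_eq mult.commute)
  then show ?thesis using assms(1) by (simp add: pos_le_divide_eq mult.commute)
qed

lemma convex_on_cSUP:
  fixes f :: "'b \<Rightarrow> 'a::real_vector \<Rightarrow> real"
  assumes A: "A \<noteq> {}" and bdd: "\<And>x. x \<in> S \<Longrightarrow> bdd_above ((\<lambda>a. f a x) ` A)"
    and cvx: "\<And>a. a \<in> A \<Longrightarrow> convex_on S (f a)"
  shows "convex_on S (\<lambda>x. SUP a\<in>A. f a x)"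
proof (rule convex_onI)
  fix t :: real and x y assume t: "0 < t" "t < 1" and xy: "x \<in> S" "y \<in> S"
  show "(SUP a\<in>A. f a ((1 - t) *\<^sub>R x + t *\<^sub>R y))
        \<le> (1 - t) * (SUP a\<in>A. f a x) + t * (SUP a\<in>A. f a y)"
  proof (rule cSUP_least[OF A])
    fix a assume a: "a \<in> A"
    have "f a ((1 - t) *\<^sub>R x + t *\<^sub>R y) \<le> (1 - t) * f a x + t * f a y"
      using convex_onD[OF cvx[OF a]] t xy by simp
    also have "\<dots> \<le> (1 - t) * (SUP a\<in>A. f a x) + t * (SUP a\<in>A. f a y)"
      using t cSUP_upper[OF a bdd[OF xy(1)]] cSUP_upper[OF a bdd[OF xy(2)]]
      by (intro add_mono mult_left_mono) auto
    finally show "f a ((1 - t) *\<^sub>R x + t *\<^sub>R y) \<le> \<dots>" .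
  qed
next
  from A obtain a where "a \<in> A" by blast
  then show "convex S" using cvx convex_on_imp_convex by blast
qed

lemma concave_on_partial_cSUP:
  fixes F :: "'a::real_vector \<Rightarrow> 'b::real_vector \<Rightarrow> real"
  assumes C: "C \<noteq> {}" and bdd: "\<And>y. bdd_above (F y ` C)"
    and conc: "concave_on (UNIV \<times> C) (\<lambda>(y, p). F y p)"
  shows "concave_on UNIV (\<lambda>y. SUP p\<in>C. F y p)"
  unfolding concave_on_def
proof (rule convex_onI)
  fix t :: real and y1 y2 :: 'a assume t: "0 < t" "t < 1"
  let ?S = "\<lambda>y. SUP p\<in>C. F y p" and ?y = "(1 - t) *\<^sub>R y1 + t *\<^sub>R y2"
  have comb: "(1 - t) * F y1 p1 + t * F y2 p2 \<le> ?S ?y" if "p1 \<in> C" "p2 \<in> C" for p1 p2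
  proof -
    let ?p = "(1 - t) *\<^sub>R p1 + t *\<^sub>R p2"
    have "(1 - t) *\<^sub>R (y1, p1) + t *\<^sub>R (y2, p2) \<in> UNIV \<times> C"
      using concave_on_imp_convex[OF conc] that t by (intro convexD_alt) auto
    then have p: "?p \<in> C" by simp
    have "(1 - t) * F y1 p1 + t * F y2 p2 \<le> F ?y ?p"
      using concave_onD[OF conc, of t "(y1, p1)" "(y2, p2)"] that t by simp
    also have "\<dots> \<le> ?S ?y" by (rule cSUP_upper[OF p bdd])
    finally show ?thesis .
  qed
  have "t * F y2 p2 \<le> ?S ?y - (1 - t) * ?S y1" if p2: "p2 \<in> C" for p2
  proof -
    have "(1 - t) * ?S y1 \<le> ?S ?y - t * F y2 p2"
      using t comb[OF _ p2] by (intro cSUP_scaled_least[OF _ C]) (auto simp: algebra_simps)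
    then show ?thesis by linarith
  qed
  then have "t * ?S y2 \<le> ?S ?y - (1 - t) * ?S y1"
    using t by (intro cSUP_scaled_least[OF _ C]) auto
  then show "- ?S ?y \<le> (1 - t) * - ?S y1 + t * - ?S y2" by linarith
qed simp

lemma lipschitz_on_pair:
  fixes F :: "'a::real_normed_vector \<Rightarrow> 'b::real_normed_vector \<Rightarrow> real"
  assumes "C \<ge> 0" and "\<And>x p x' p'. \<bar>F x p - F x' p'\<bar> \<le> C * norm (x - x') + C * norm (p - p')"
  shows "(2 * C)-lipschitz_on UNIV (\<lambda>(x, p). F x p)"
proof (rule lipschitz_onI)
  fix a b :: "'a \<times> 'b"
  obtain x p x' p' where ab: "a = (x, p)" "b = (x', p')" by (cases a, cases b) auto
  have "C * dist x x' \<le> C * dist a b"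
    using assms(1) dist_fst_le[of a b] ab by (intro mult_left_mono) auto
  moreover have "C * dist p p' \<le> C * dist a b"
    using assms(1) dist_snd_le[of a b] ab by (intro mult_left_mono) auto
  moreover have "\<bar>F x p - F x' p'\<bar> \<le> C * dist x x' + C * dist p p'"
    using assms(2) by (simp add: dist_norm)
  ultimately show "dist ((\<lambda>(x, p). F x p) a) ((\<lambda>(x, p). F x p) b) \<le> 2 * C * dist a b"
    using ab by (simp add: dist_real_def)
qed (use assms in simp)


section \<open>The regularization construction\<close>

locale regularization =
  fixes Om :: "'a::euclidean_space set" and R :: real and H :: "'a \<Rightarrow> 'a \<Rightarrow> real" and M :: real
  assumes R_pos: "R > 0"
    and K_nonempty: "closure Om \<noteq> {}"
    and K_in_ball: "closure Om \<subseteq> ball 0 R"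
    and H_classH: "classH Om H"
    and H_bounded: "\<And>x y. x \<in> closure Om \<Longrightarrow> y \<in> closure Om \<Longrightarrow> \<bar>H x y\<bar> \<le> M"
begin

abbreviation "K \<equiv> closure Om"
abbreviation "B \<equiv> ball (0::'a) R"
abbreviation "L \<equiv> LagL Om H"
abbreviation "Ls \<equiv> LagStar Om R H"
abbreviation "Lss \<equiv> LagStarStar Om R H"
abbreviation "HL \<equiv> HamB R Lss"
abbreviation "Hr \<equiv> Hreg Om R H"
abbreviation "LR \<equiv> LagL Om Hr"

lemma inner_K_le: "y \<in> K \<Longrightarrow> \<bar>inner y p\<bar> \<le> R * norm p"
  using K_in_ball by (intro abs_inner_le_radius) (auto simp: subset_iff dist_norm)

lemma inner_B_le: "p \<in> B \<Longrightarrow> \<bar>inner y p\<bar> \<le> R * norm y"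
  by (intro abs_inner_le_radius) (simp add: dist_norm)

lemma norm_B_le: "p \<in> B \<Longrightarrow> R * norm p \<le> R * R"
  using R_pos by (intro mult_left_mono) (auto simp: dist_norm)

lemma norm_K_le: "y \<in> K \<Longrightarrow> R * norm y \<le> R * R"
  using R_pos K_in_ball by (intro mult_left_mono) (auto simp: subset_iff dist_norm)

lemma zero_in_B: "0 \<in> B"
  using R_pos by simp

lemma B_nonempty: "B \<noteq> {}"
  using zero_in_B by blast

lemma KB_nonempty: "K \<times> B \<noteq> {}"
  using K_nonempty zero_in_B by auto

lemma K_point: obtains x where "x \<in> K"
  using K_nonempty by (metis ex_in_conv)

lemma H_antisym: "x \<in> K \<Longrightarrow> y \<in> K \<Longrightarrow> H x y = - H y x"
  using H_classH unfolding classH_def by blast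

lemma L_term_le: "x \<in> K \<Longrightarrow> y \<in> K \<Longrightarrow> inner y p - H y x \<le> R * norm p + M"
  using inner_K_le[of y p] H_bounded[of y x] by linarith

lemma L_bdd: "x \<in> K \<Longrightarrow> bdd_above ((\<lambda>y. inner y p - H y x) ` K)"
  by (rule bdd_aboveI2) (rule L_term_le)

lemma L_ge: "x \<in> K \<Longrightarrow> y \<in> K \<Longrightarrow> inner y p - H y x \<le> L x p"
  unfolding LagL_def by (rule cSUP_upper[OF _ L_bdd])

lemma L_le: "x \<in> K \<Longrightarrow> L x p \<le> R * norm p + M"
  unfolding LagL_def
  by (rule cSUP_least[OF K_nonempty]) (rule L_term_le)

text \<open>Since \<open>H\<close> vanishes on the diagonal, \<open>L x p \<ge> \<langle>x, p\<rangle>\<close>.\<close>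
lemma L_ge_inner: "x \<in> K \<Longrightarrow> inner x p \<le> L x p"
  using L_ge[of x x p] H_antisym[of x x] by simp

lemma Ls_bdd:
  "bdd_above ((\<lambda>xp. inner y (snd xp) + inner q (fst xp) - L (fst xp) (snd xp)) ` (K \<times> B))"
proof (rule bdd_aboveI2[where M = "R * norm y + R * norm q + R * R"])
  fix xp assume "xp \<in> K \<times> B"
  then obtain x p where xp: "xp = (x, p)" "x \<in> K" "p \<in> B" by auto
  show "inner y (snd xp) + inner q (fst xp) - L (fst xp) (snd xp) \<le> R * norm y + R * norm q + R * R"
    using xp L_ge_inner[of x p] inner_B_le[of p y] inner_K_le[of x q] inner_K_le[of x p]
      norm_B_le[of p] by (auto simp: abs_le_iff inner_commute)
qed

lemma Ls_ge: "x \<in> K \<Longrightarrow> p \<in> B \<Longrightarrow> inner y p + inner q x - L x p \<le> Ls q y"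
  unfolding LagStar_def using cSUP_upper[OF _ Ls_bdd, of "(x, p)"] by auto

text \<open>The key inequality \<open>L_H^* (p, x) \<le> L_H (x, p)\<close>: the two suprema defining the terms are
  linked by the anti-symmetry of \<open>H\<close>.\<close>
lemma Ls_le_L:
  assumes "x \<in> K" and "p \<in> B" shows "Ls p x \<le> L x p"
  unfolding LagStar_def
proof (rule cSUP_least[OF KB_nonempty])
  fix xp assume "xp \<in> K \<times> B"
  then obtain x' p' where xp: "xp = (x', p')" "x' \<in> K" "p' \<in> B" by auto
  have "inner x p' - H x x' \<le> L x' p'" by (rule L_ge[OF xp(2) assms(1)])
  moreover have "inner x' p - H x' x \<le> L x p" by (rule L_ge[OF assms(1) xp(2)])
  moreover have "H x x' = - H x' x" by (rule H_antisym[OF assms(1) xp(2)])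
  ultimately show "inner x (snd xp) + inner p (fst xp) - L (fst xp) (snd xp) \<le> L x p"
    using xp by (simp add: inner_commute)
qed

lemma Ls_lower: "- (R * norm q) - M \<le> Ls q y"
proof -
  obtain x where x: "x \<in> K" by (rule K_point)
  have "inner y 0 + inner q x - L x 0 \<le> Ls q y" by (rule Ls_ge[OF x zero_in_B])
  then show ?thesis using L_le[OF x, of 0] inner_K_le[OF x, of q] by (simp add: inner_commute)
qed

lemma Lss_bdd:
  "bdd_above ((\<lambda>xp. inner y (snd xp) + inner q (fst xp) - Ls (snd xp) (fst xp)) ` (K \<times> B))"
proof (rule bdd_aboveI2[where M = "R * norm y + R * norm q + R * R + M"])
  fix xp assume "xp \<in> K \<times> B"
  then obtain x p where xp: "xp = (x, p)" "x \<in> K" "p \<in> B" by auto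
  show "inner y (snd xp) + inner q (fst xp) - Ls (snd xp) (fst xp) \<le> R * norm y + R * norm q + R * R + M"
    using xp Ls_lower[of p x] inner_B_le[of p y] inner_K_le[of x q] norm_B_le[of p]
    by (auto simp: abs_le_iff inner_commute)
qed

lemma Lss_ge: "x \<in> K \<Longrightarrow> p \<in> B \<Longrightarrow> inner y p + inner q x - Ls p x \<le> Lss y q"
  unfolding LagStarStar_def using cSUP_upper[OF _ Lss_bdd, of "(x, p)"] by auto

lemma Lss_le_L:
  assumes "x \<in> K" and "p \<in> B" shows "Lss x p \<le> L x p"
  unfolding LagStarStar_def
proof (rule cSUP_least[OF KB_nonempty])
  fix xp assume "xp \<in> K \<times> B"
  then show "inner x (snd xp) + inner p (fst xp) - Ls (snd xp) (fst xp) \<le> L x p"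
    using Ls_ge[OF assms, of "fst xp" "snd xp"] by (auto simp: inner_commute)
qed

lemma Lss_lower: "- (R * norm q) - M \<le> Lss y q"
proof -
  obtain x where x: "x \<in> K" by (rule K_point)
  have "inner y 0 + inner q x - Ls 0 x \<le> Lss y q" by (rule Lss_ge[OF x zero_in_B])
  then show ?thesis
    using Ls_le_L[OF x zero_in_B] L_le[OF x, of 0] inner_K_le[OF x, of q] by (simp add: inner_commute)
qed

text \<open>As a supremum of affine functions with slopes in \<open>B \<times> K\<close>, \<open>L_H^{**}\<close> is jointly convex
  and \<open>R\<close>-Lipschitz in each variable.\<close>
lemma Lss_lipschitz: "\<bar>Lss y q - Lss y' q'\<bar> \<le> R * norm (y - y') + R * norm (q - q')"
  unfolding LagStarStar_def
proof (rule cSUP_abs_diff_le[OF KB_nonempty Lss_bdd Lss_bdd])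
  fix xp assume "xp \<in> K \<times> B"
  then obtain x p where xp: "xp = (x, p)" "x \<in> K" "p \<in> B" by auto
  have "inner y p + inner q x - (inner y' p + inner q' x) = inner (y - y') p + inner (q - q') x"
    by (simp add: inner_diff_left)
  then show "\<bar>inner y (snd xp) + inner q (fst xp) - Ls (snd xp) (fst xp)
      - (inner y' (snd xp) + inner q' (fst xp) - Ls (snd xp) (fst xp))\<bar>
    \<le> R * norm (y - y') + R * norm (q - q')"
    using xp inner_B_le[of p "y - y'"] inner_K_le[of x "q - q'"] by (auto simp: inner_commute)
qed

lemma Lss_convex: "convex_on UNIV (\<lambda>(y, q). Lss y q)"
  unfolding LagStarStar_def case_prod_beta
proof (rule convex_on_cSUP[OF KB_nonempty])
  fix xp :: "'a \<times> 'a"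
  show "convex_on UNIV (\<lambda>yq. inner (fst yq) (snd xp) + inner (snd yq) (fst xp) - Ls (snd xp) (fst xp))"
    by (rule convex_onI) (auto simp: inner_add_left algebra_simps)
qed (rule Lss_bdd)

lemma HL_bdd: "bdd_above ((\<lambda>p. inner x p - Lss y p) ` B)"
proof (rule bdd_aboveI2[where M = "R * norm x + R * R + M"])
  fix p assume "p \<in> B"
  then show "inner x p - Lss y p \<le> R * norm x + R * R + M"
    using Lss_lower[of p y] inner_B_le[of p x] norm_B_le[of p] by linarith
qed

lemma HL_ge: "p \<in> B \<Longrightarrow> inner x p - Lss y p \<le> HL x y"
  unfolding HamB_def by (rule cSUP_upper[OF _ HL_bdd])

lemma HL_lipschitz: "\<bar>HL x y - HL x' y'\<bar> \<le> R * norm (x - x') + R * norm (y - y')"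
  unfolding HamB_def
proof (rule cSUP_abs_diff_le[OF B_nonempty HL_bdd HL_bdd])
  fix p assume p: "p \<in> B"
  have "inner x p - Lss y p - (inner x' p - Lss y' p) = inner (x - x') p - (Lss y p - Lss y' p)"
    by (simp add: inner_diff_left)
  then show "\<bar>inner x p - Lss y p - (inner x' p - Lss y' p)\<bar> \<le> R * norm (x - x') + R * norm (y - y')"
    using inner_B_le[OF p, of "x - x'"] Lss_lipschitz[of y p y' p] by simp
qed

text \<open>Convexity in \<open>x\<close>: a supremum of affine functions of \<open>x\<close>.\<close>
lemma HL_convex: "convex_on UNIV (\<lambda>x. HL x y)"
  unfolding HamB_def
proof (rule convex_on_cSUP[OF B_nonempty HL_bdd])
  fix p show "convex_on UNIV (\<lambda>x. inner x p - Lss y p)"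
    by (rule convex_onI) (auto simp: inner_add_left algebra_simps)
qed

text \<open>Concavity in \<open>y\<close>: a partial supremum of the jointly concave function
  \<open>(y, p) \<mapsto> \<langle>x, p\<rangle> - L_H^{**}(y, p)\<close> over the convex set \<open>B\<close>.\<close>
lemma HL_concave: "concave_on UNIV (\<lambda>y. HL x y)"
  unfolding HamB_def
proof (rule concave_on_partial_cSUP[OF B_nonempty HL_bdd])
  have UB: "convex (UNIV \<times> B)" by (intro convex_Times) auto
  have "concave_on (UNIV \<times> B) (\<lambda>yp. inner x (snd yp))"
    unfolding concave_on_def by (rule convex_onI[OF _ UB]) (auto simp: inner_add_right algebra_simps)
  moreover have "convex_on (UNIV \<times> B) (\<lambda>(y, p). Lss y p)"
    by (rule convex_on_subset[OF Lss_convex _ UB]) simp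
  ultimately show "concave_on (UNIV \<times> B) (\<lambda>(y, p). inner x p - Lss y p)"
    unfolding case_prod_beta by (rule concave_on_diff)
qed

text \<open>On \<open>K \<times> B\<close> the Hamiltonian is dominated through \<open>L_H^* \<le> L_H\<close>.\<close>
lemma HL_le_L:
  assumes "x \<in> K" and "p \<in> B" shows "HL x y \<le> L x p - inner y p"
  unfolding HamB_def
proof (rule cSUP_least[OF B_nonempty])
  fix q assume "q \<in> B"
  have "inner y p + inner q x - Ls p x \<le> Lss y q" by (rule Lss_ge[OF assms])
  then show "inner x q - Lss y q \<le> L x p - inner y p"
    using Ls_le_L[OF assms] by (simp add: inner_commute)
qed

lemma Hr_double: "2 * Hr x y = HL x y - HL y x"
  by (simp add: Hreg_def)

lemma Hr_antisym: "Hr x y = - Hr y x"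
  using Hr_double[of x y] Hr_double[of y x] by linarith

lemma Hr_lipschitz: "\<bar>Hr x y - Hr x' y'\<bar> \<le> R * norm (x - x') + R * norm (y - y')"
proof -
  have "2 * Hr x y - 2 * Hr x' y' = (HL x y - HL x' y') - (HL y x - HL y' x')"
    using Hr_double[of x y] Hr_double[of x' y'] by simp
  then show ?thesis
    using HL_lipschitz[of x y x' y'] HL_lipschitz[of y x y' x'] by linarith
qed

text \<open>Anti-symmetry gives \<open>H_reg(y, y) = 0\<close>, so the Lipschitz bound controls \<open>|H_reg|\<close>.\<close>
lemma Hr_abs_le: "\<bar>Hr x y\<bar> \<le> R * norm x + R * norm y"
proof -
  have "\<bar>Hr x y - Hr y y\<bar> \<le> R * norm (x - y)" using Hr_lipschitz[of x y y y] by simp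
  moreover have "Hr y y = 0" using Hr_antisym[of y y] by simp
  moreover have "R * norm (x - y) \<le> R * norm x + R * norm y"
    using R_pos norm_triangle_ineq4[of x y] by (simp add: distrib_left[symmetric])
  ultimately show ?thesis by simp
qed

lemma Hr_convex: "convex_on UNIV (\<lambda>x. Hr x y)"
proof -
  have "convex_on UNIV (\<lambda>x. (1/2) * (HL x y - HL y x))"
    using HL_convex HL_concave by (intro convex_on_cmul convex_on_diff) auto
  moreover have "(1/2) * (HL x y - HL y x) = Hr x y" for x
    using Hr_double[of x y] by simp
  ultimately show ?thesis by simp
qed

lemma Hr_concave: "concave_on UNIV (\<lambda>y. Hr x y)"
  unfolding concave_on_def using Hr_convex[of x] by (simp add: Hr_antisym[of x])

lemma Hr_lipschitz_on: "(2 * R)-lipschitz_on UNIV (\<lambda>(x, y). Hr x y)"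
  using R_pos Hr_lipschitz by (intro lipschitz_on_pair) auto

lemma Hr_classH: "classH Om Hr"
  unfolding classH_def
  using continuous_on_subset[OF lipschitz_on_continuous_on[OF Hr_lipschitz_on]] Hr_antisym by blast

lemma LR_term_abs: "y \<in> K \<Longrightarrow> \<bar>inner y p - Hr y x\<bar> \<le> R * norm x + R * norm p + R * R"
  using inner_K_le[of y p] Hr_abs_le[of y x] norm_K_le[of y] by linarith

lemma LR_bdd: "bdd_above ((\<lambda>y. inner y p - Hr y x) ` K)"
  by (rule bdd_aboveI2) (use LR_term_abs in \<open>force simp: abs_le_iff\<close>)

lemma LR_ge: "y \<in> K \<Longrightarrow> inner y p - Hr y x \<le> LR x p"
  unfolding LagL_def by (rule cSUP_upper[OF _ LR_bdd])

lemma LR_abs_le: "\<bar>LR x p\<bar> \<le> R * norm x + R * norm p + R * R"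
proof -
  obtain y where y: "y \<in> K" by (rule K_point)
  have "LR x p \<le> R * norm x + R * norm p + R * R"
    unfolding LagL_def by (rule cSUP_least[OF K_nonempty]) (use LR_term_abs in \<open>force simp: abs_le_iff\<close>)
  moreover have "inner y p - Hr y x \<le> LR x p" by (rule LR_ge[OF y])
  ultimately show ?thesis using LR_term_abs[OF y, of p x] by linarith
qed

lemma LR_lipschitz: "\<bar>LR x p - LR x' p'\<bar> \<le> R * norm (x - x') + R * norm (p - p')"
  unfolding LagL_def
proof (rule cSUP_abs_diff_le[OF K_nonempty LR_bdd LR_bdd])
  fix y assume y: "y \<in> K"
  have "inner y p - Hr y x - (inner y p' - Hr y x') = inner y (p - p') - (Hr y x - Hr y x')"
    by (simp add: inner_diff_right)
  then show "\<bar>inner y p - Hr y x - (inner y p' - Hr y x')\<bar> \<le> R * norm (x - x') + R * norm (p - p')"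
    using inner_K_le[OF y, of "p - p'"] Hr_lipschitz[of y x y x'] by simp
qed

lemma LR_lipschitz_on: "(2 * R)-lipschitz_on UNIV (\<lambda>(x, p). LR x p)"
  using R_pos LR_lipschitz by (intro lipschitz_on_pair) auto

text \<open>Joint convexity: each \<open>(x, p) \<mapsto> \<langle>y, p\<rangle> - H_reg(y, x)\<close> is convex because \<open>H_reg\<close>
  is concave in its second argument.\<close>
lemma LR_convex: "convex_on UNIV (\<lambda>(x, p). LR x p)"
  unfolding LagL_def case_prod_beta
proof (rule convex_on_cSUP[OF K_nonempty LR_bdd])
  fix y
  show "convex_on UNIV (\<lambda>xp. inner y (snd xp) - Hr y (fst xp))"
  proof (rule convex_onI)
    fix t :: real and a b :: "'a \<times> 'a" assume t: "0 < t" "t < 1"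
    have "(1 - t) * Hr y (fst a) + t * Hr y (fst b) \<le> Hr y ((1 - t) *\<^sub>R fst a + t *\<^sub>R fst b)"
      using concave_onD[OF Hr_concave] t by simp
    then show "inner y (snd ((1 - t) *\<^sub>R a + t *\<^sub>R b)) - Hr y (fst ((1 - t) *\<^sub>R a + t *\<^sub>R b))
        \<le> (1 - t) * (inner y (snd a) - Hr y (fst a)) + t * (inner y (snd b) - Hr y (fst b))"
      by (simp add: inner_add_right algebra_simps)
  qed simp
qed

lemma LR_le_L:
  assumes "x \<in> K" and "p \<in> B" shows "LR x p \<le> L x p"
  unfolding LagL_def[of _ Hr]
proof (rule cSUP_least[OF K_nonempty])
  fix y assume "y \<in> K"
  have "inner y p - Lss x p \<le> HL y x" by (rule HL_ge[OF assms(2)])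
  moreover have "Lss x p \<le> L x p" by (rule Lss_le_L[OF assms])
  moreover have "HL x y \<le> L x p - inner y p" by (rule HL_le_L[OF assms])
  ultimately show "inner y p - Hr y x \<le> L x p" using Hr_double[of y x] by linarith
qed

end

lemma classH_bounded:
  fixes Om :: "'a::euclidean_space set"
  assumes "classH Om H" and "bounded Om"
  obtains M where "\<And>x y. x \<in> closure Om \<Longrightarrow> y \<in> closure Om \<Longrightarrow> \<bar>H x y\<bar> \<le> M"
proof -
  have "compact (closure Om)" using assms(2) by (simp add: compact_closure)
  moreover have "continuous_on (closure Om \<times> closure Om) (\<lambda>(x, y). H x y)"
    using assms(1) by (simp add: classH_def)
  ultimately have "bounded ((\<lambda>(x, y). H x y) ` (closure Om \<times> closure Om))"
    by (intro compact_imp_bounded compact_continuous_image compact_Times)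
  then obtain M where "\<forall>z \<in> (\<lambda>(x, y). H x y) ` (closure Om \<times> closure Om). norm z \<le> M"
    by (auto simp: bounded_iff)
  then show ?thesis using that by force
qed

theorem proposition2p2:
  fixes Om :: "'a::euclidean_space set" and R :: real and H :: "'a \<Rightarrow> 'a \<Rightarrow> real"
  assumes "open Om" and "connected Om" and "Om \<noteq> {}" and "bounded Om"
    and "R > 0" and "closure Om \<subseteq> ball 0 R"
    and "classH Om H"
  shows
    "(\<forall>x y. Hreg Om R H x y = - Hreg Om R H y x) \<and>
     (\<forall>y. convex_on UNIV (\<lambda>x. Hreg Om R H x y)) \<and>
     (\<forall>x. concave_on UNIV (\<lambda>y. Hreg Om R H x y)) \<and>
     classH Om (Hreg Om R H)
   \<and>
     convex_on UNIV (\<lambda>(x, p). LagL Om (Hreg Om R H) x p) \<and>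
     continuous_on UNIV (\<lambda>(x, p). LagL Om (Hreg Om R H) x p) \<and>
     (\<forall>x\<in>closure Om. \<forall>p\<in>ball 0 R. LagL Om (Hreg Om R H) x p \<le> LagL Om H x p)
   \<and>
     (\<forall>x p. \<bar>LagL Om (Hreg Om R H) x p\<bar> \<le> R * norm x + R * norm p + 5 * R^2) \<and>
     (\<forall>x y. \<bar>Hreg Om R H x y\<bar> \<le> R * norm x + R * norm y + 4 * R^2)
   \<and>
     (\<exists>C \<le> 4 * real DIM('a) * R. C-lipschitz_on UNIV (\<lambda>(x, p). LagL Om (Hreg Om R H) x p)) \<and>
     (\<exists>C \<le> 4 * real DIM('a) * R. C-lipschitz_on UNIV (\<lambda>(x, y). Hreg Om R H x y))"
proof -
  obtain M where "\<And>x y. x \<in> closure Om \<Longrightarrow> y \<in> closure Om \<Longrightarrow> \<bar>H x y\<bar> \<le> M"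
    using classH_bounded[OF assms(7,4)] by blast
  then interpret regularization Om R H M
    using assms by unfold_locales auto
  have R_sq: "0 \<le> R * R" "R * R \<le> 4 * R^2" "R * R \<le> 5 * R^2"
    using assms(5) by (auto simp: power2_eq_square)
  have "1 \<le> 2 * real DIM('a)" using DIM_positive[where 'a = 'a] by linarith
  then have lip_const: "2 * R \<le> 4 * real DIM('a) * R" using assms(5) by simp
  have "\<bar>LR x p\<bar> \<le> R * norm x + R * norm p + 5 * R^2" for x p
    using LR_abs_le[of x p] R_sq by linarith
  moreover have "\<bar>Hr x y\<bar> \<le> R * norm x + R * norm y + 4 * R^2" for x y
    using Hr_abs_le[of x y] R_sq by linarith
  ultimately show ?thesis
    using Hr_antisym Hr_convex Hr_concave Hr_classH LR_convex LR_le_L lip_const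
      lipschitz_on_continuous_on[OF LR_lipschitz_on] LR_lipschitz_on Hr_lipschitz_on by blast
qed

end
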